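(* Let $\mu\in\mathcal P_\varnothing(nl)$ have Frobenius form $(a_1,\dots,a_k\mid b_1,\dots,b_k)$. Then \[\mathrm{Eig}(\mu)=\sum_{i=1}^k\left(t^{e'_{b_i}}\sum_{j=1}^{\lceil b_i/l\rceil}t^{-(j-1)h}+t^{e''_{a_i}}\sum_{j=1}^{\lfloor(a_i+1)/l\rfloor}t^{(j-1)h}\right),\] where the subscripts of $e',e''$ are read modulo $l$.
   Context: Let $\mathbf h=(h,H_1,\dots,H_{l-1})\in\mathbb{Q}^l$ be a (generic) parameter and $H_0=-(H_1+\dots+H_{l-1})$. Let $\theta=(\theta_0,\dots,\theta_{l-1})=(-h+H_0,H_1,\dots,H_{l-1})$, with indices mod $l$; note $\sum_i\theta_i=-h$. Define $e'_0=-h$ and $e'_i=H_1+\dots+H_i$ for $1\le i\le l-1$. Define $e''_{l-1}=0$ and $e''_i=h+\sum_{j=1}^{l-i-1}H_j$ for $0\le i\le l-2$. $\mathcal P_\varnothing(nl)$ is the set of partitions of $nl$ with empty $l$-core. The Frobenius form has $a_i=\mu_i-i$ and $b_i=\mu^t_i-i$ for the diagonal cells $(i,i)$. For $m\ge1$ and $1\le r\le m$, let $A(m,r)$ be the $m\times m$ matrix with only nonzero entries $A(m,r)_{j+1,j}=\sum_{s=1}^j\theta_{r-s}$ for $1\le j<r$ and $A(m,r)_{j+1,j}=-\sum_{s=0}^{m-j-1}\theta_{-m+r+s}$ for $r\le j\le m-1$. Let $\Lambda(m)$ be the matrix with ones at $(j,j+1)$. Then $\Lambda(m)A(m,r)=\mathrm{diag}(\alpha_1,\dots,\alpha_m)$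 with $\alpha_j=A(m,r)_{j+1,j}$ for $j<m$ and $\alpha_m=0$. For $\mu$ with $r_i=b_i+1$ and $m_i=a_i+b_i+1$, let $\alpha^{(i)}_j$ be these diagonal entries for $(m,r)=(m_i,r_i)$. Define the formal sum $\mathrm{Eig}(\mu,i)=\sum_{1\le j\le m_i,\ j\equiv r_i-1\ (\mathrm{mod}\ l)}t^{\alpha^{(i)}_j}$ and $\mathrm{Eig}(\mu)=\sum_{i=1}^k\mathrm{Eig}(\mu,i)$, a sum of monomials with rational exponents. *)

theory Defs
  imports Complex_Main "HOL-Library.Multiset"
begin

text \<open>A partition is a weakly decreasing list of positive naturals. Rows and columns
  are indexed from 0 internally; the cell (i,j) (0-indexed) lies in the diagram iff
  i < length mu and j < mu ! i.\<close>

definition is_partition :: "nat list \<Rightarrow> bool" where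
  "is_partition mu \<longleftrightarrow> sorted_wrt (\<ge>) mu \<and> 0 \<notin> set mu"

definition cells :: "nat list \<Rightarrow> (nat \<times> nat) set" where
  "cells mu = {(i, j). i < length mu \<and> j < mu ! i}"

definition adjacent_cells :: "nat \<times> nat \<Rightarrow> nat \<times> nat \<Rightarrow> bool" where
  "adjacent_cells c d \<longleftrightarrow>
     (fst c = fst d \<and> (snd d = Suc (snd c) \<or> snd c = Suc (snd d))) \<or>
     (snd c = snd d \<and> (fst d = Suc (fst c) \<or> fst c = Suc (fst d)))"

definition connected_cells :: "(nat \<times> nat) set \<Rightarrow> bool" where
  "connected_cells D \<longleftrightarrow>
     (\<forall>c\<in>D. \<forall>d\<in>D. (\<lambda>x y. x \<in> D \<and> y \<in> D \<and> adjacent_cells x y)\<^sup>*\<^sup>* c d)"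

definition no_2x2_square :: "(nat \<times> nat) set \<Rightarrow> bool" where
  "no_2x2_square D \<longleftrightarrow>
     \<not> (\<exists>i j. (i, j) \<in> D \<and> (Suc i, j) \<in> D \<and> (i, Suc j) \<in> D \<and> (Suc i, Suc j) \<in> D)"

definition adds_rim_hook :: "nat \<Rightarrow> nat list \<Rightarrow> nat list \<Rightarrow> bool" where
  "adds_rim_hook l lam mu \<longleftrightarrow>
     is_partition lam \<and> is_partition mu \<and> cells lam \<subseteq> cells mu \<and>
     card (cells mu - cells lam) = l \<and> cells mu - cells lam \<noteq> {} \<and>
     connected_cells (cells mu - cells lam) \<and> no_2x2_square (cells mu - cells lam)"

text \<open>mu has empty l-core iff the empty partition is reached by successively
  removing l-rim hooks.\<close>

inductive empty_core :: "nat \<Rightarrow> nat list \<Rightarrow> bool" for l :: nat where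
  empty: "empty_core l []"
| add: "empty_core l lam \<Longrightarrow> adds_rim_hook l lam mu \<Longrightarrow> empty_core l mu"

definition P_empty :: "nat \<Rightarrow> nat \<Rightarrow> nat list set" where
  "P_empty l N = {mu. is_partition mu \<and> sum_list mu = N \<and> empty_core l mu}"

text \<open>Column length (conjugate partition), 0-indexed column j.\<close>

definition conj_part :: "nat list \<Rightarrow> nat \<Rightarrow> nat" where
  "conj_part mu j = card {i. i < length mu \<and> j < mu ! i}"

definition frob_k :: "nat list \<Rightarrow> nat" where
  "frob_k mu = card {i. i < length mu \<and> i < mu ! i}"

text \<open>Frobenius coordinates a_i = mu_i - i, b_i = mu^t_i - i for 1 \<le> i \<le> k
  (1-indexed rows/columns as in the paper).\<close>

definition frob_a :: "nat list \<Rightarrow> nat \<Rightarrow> nat" where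
  "frob_a mu i = mu ! (i - 1) - i"

definition frob_b :: "nat list \<Rightarrow> nat \<Rightarrow> nat" where
  "frob_b mu i = conj_part mu (i - 1) - i"

text \<open>The parameter is h and H_1,...,H_{l-1} (values H i for 1 \<le> i \<le> l-1 are used).\<close>

definition H0 :: "nat \<Rightarrow> (nat \<Rightarrow> rat) \<Rightarrow> rat" where
  "H0 l H = - (\<Sum>i=1..l-1. H i)"

definition theta :: "nat \<Rightarrow> rat \<Rightarrow> (nat \<Rightarrow> rat) \<Rightarrow> int \<Rightarrow> rat" where
  "theta l h H i = (let i' = nat (i mod int l) in if i' = 0 then - h + H0 l H else H i')"

definition e' :: "nat \<Rightarrow> rat \<Rightarrow> (nat \<Rightarrow> rat) \<Rightarrow> nat \<Rightarrow> rat" where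
  "e' l h H i = (if i = 0 then - h else (\<Sum>j=1..i. H j))"

definition e'' :: "nat \<Rightarrow> rat \<Rightarrow> (nat \<Rightarrow> rat) \<Rightarrow> nat \<Rightarrow> rat" where
  "e'' l h H i = (if i = l - 1 then 0 else h + (\<Sum>j=1..l-i-1. H j))"

text \<open>Subdiagonal entries A(m,r)_{j+1,j}, 1 \<le> j \<le> m-1 (zero elsewhere).\<close>

definition A_sub :: "nat \<Rightarrow> rat \<Rightarrow> (nat \<Rightarrow> rat) \<Rightarrow> nat \<Rightarrow> nat \<Rightarrow> nat \<Rightarrow> rat" where
  "A_sub l h H m r j =
     (if 1 \<le> j \<and> j < r then (\<Sum>s=1..j. theta l h H (int r - int s))
      else if r \<le> j \<and> j \<le> m - 1 then
        - (\<Sum>s=0..m-j-1. theta l h H (- int m + int r + int s))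
      else 0)"

text \<open>Diagonal entries alpha_j of Lambda(m) A(m,r): alpha_j = A_{j+1,j} for j < m and
  alpha_m = 0.\<close>

definition alpha :: "nat \<Rightarrow> rat \<Rightarrow> (nat \<Rightarrow> rat) \<Rightarrow> nat \<Rightarrow> nat \<Rightarrow> nat \<Rightarrow> rat" where
  "alpha l h H m r j = (if j < m then A_sub l h H m r j else 0)"

text \<open>A formal sum of monomials t^x with rational exponents is represented by the
  multiset of its exponents.\<close>

definition Eig_i :: "nat \<Rightarrow> rat \<Rightarrow> (nat \<Rightarrow> rat) \<Rightarrow> nat list \<Rightarrow> nat \<Rightarrow> rat multiset" where
  "Eig_i l h H mu i =
     (let r = frob_b mu i + 1; m = frob_a mu i + frob_b mu i + 1 in
      image_mset (alpha l h H m r)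
        (mset_set {j \<in> {1..m}. int j mod int l = (int r - 1) mod int l}))"

definition Eig :: "nat \<Rightarrow> rat \<Rightarrow> (nat \<Rightarrow> rat) \<Rightarrow> nat list \<Rightarrow> rat multiset" where
  "Eig l h H mu = (\<Sum>i\<in>{1..frob_k mu}. Eig_i l h H mu i)"

end

theory Submission
  imports Defs
begin

text \<open>Each diagonal hook \<open>(a | b)\<close> of \<open>\<mu>\<close> contributes the subdiagonal entries
  \<open>\<alpha>\<^sub>j\<close> of \<open>A(a+b+1, b+1)\<close> with \<open>j \<equiv> b (mod l)\<close>. For \<open>j \<le> b\<close>, \<open>\<alpha>\<^sub>j\<close> is a sum of
  \<open>j\<close> consecutive \<open>\<theta>\<close>'s which, by \<open>l\<close>-periodicity, equals \<open>\<theta>\<^sub>1 + \<dots> + \<theta>\<^sub>j\<close>; for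
  \<open>j = b + kl\<close> it is \<open>-(\<theta>\<^sub>0 + \<theta>\<^bsub>-1\<^esub> + \<dots> + \<theta>\<^bsub>-p\<^esub>)\<close> with \<open>p = a - kl\<close>. As \<open>\<theta>\<close> sums
  to \<open>-h\<close> over a period, these partial sums change by \<open>h\<close> per full period, and the sums
  over at most one period are exactly \<open>e'\<close> and \<open>e''\<close>. So each hook gives two arithmetic
  progressions with step \<open>h\<close>, of lengths \<open>\<lceil>b/l\<rceil>\<close> and \<open>\<lfloor>(a+1)/l\<rfloor>\<close>.\<close>

lemma nat_ceiling_of_nat_divide:
  fixes b l :: nat
  assumes "l > 0" "b > 0"
  shows "nat \<lceil>(of_nat b :: rat) / of_nat l\<rceil> = (b - 1) div l + 1"
proof -
  define q where "q = (b - 1) div l"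
  have "q * l < b" "b \<le> q * l + l"
    using assms div_mult_mod_eq[of "b - 1" l] mod_less_divisor[of l "b - 1"]
    unfolding q_def by linarith+
  then have "of_int (int q + 1) - 1 < (of_nat b :: rat) / of_nat l"
    "(of_nat b :: rat) / of_nat l \<le> of_int (int q + 1)"
    using assms by (simp_all add: field_simps flip: of_nat_mult of_nat_add)
  then have "\<lceil>(of_nat b :: rat) / of_nat l\<rceil> = int q + 1"
    by (rule ceiling_unique)
  then show ?thesis unfolding q_def by simp
qed

lemma image_mset_mset_set_bij_betw:
  assumes "bij_betw g A B"
  shows "image_mset f (mset_set B) = image_mset (f \<circ> g) (mset_set A)"
  using assms by (simp add: bij_betw_def image_mset_mset_set flip: multiset.map_comp)

lemma bij_betw_residue_class_atLeastAtMost: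
  fixes b l :: nat
  assumes "0 < l" "0 < b"
  shows "bij_betw (\<lambda>j. (b - 1) mod l + 1 + (j - 1) * l) {1..(b - 1) div l + 1}
    {j \<in> {1..b}. j mod l = b mod l}"
proof -
  define d where "d = (b - 1) mod l + 1"
  define Q where "Q = (b - 1) div l + 1"
  define g where "g j = d + (j - 1) * l" for j
  have b: "b = d + (Q - 1) * l" and d: "0 < d" "d \<le> l" and Q: "0 < Q"
    using assms unfolding d_def Q_def by (simp_all add: Suc_leI)
  have "bij_betw g {1..Q} {j \<in> {1..b}. j mod l = b mod l}"
  proof (rule bij_betw_imageI)
    show "inj_on g {1..Q}"
      using assms(1) by (auto simp: inj_on_def g_def)
    show "g ` {1..Q} = {j \<in> {1..b}. j mod l = b mod l}"
    proof (intro equalityI subsetI)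
      fix x assume "x \<in> g ` {1..Q}"
      then obtain j where "j \<in> {1..Q}" "x = g j" by auto
      then show "x \<in> {j \<in> {1..b}. j mod l = b mod l}"
        using b d by (auto simp: g_def mod_add_right_eq)
    next
      fix x assume x: "x \<in> {j \<in> {1..b}. j mod l = b mod l}"
      then obtain t where t: "b - x = l * t"
        using mod_eq_dvd_iff_nat[of x b l] by (auto elim: dvdE)
      have "b \<le> Q * l"
        using b d Q by (cases Q) simp_all
      moreover have "t * l < b"
        using x t by (auto simp: mult.commute)
      ultimately have "t * l < Q * l"
        by linarith
      then have "t < Q"
        by simp
      then have "(Q - 1) * l = (Q - t - 1) * l + t * l"
        by (simp add: add_mult_distrib [symmetric])
      then have "x = g (Q - t)"
        using x t b by (simp add: g_def mult.commute) linarith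
      then show "x \<in> g ` {1..Q}" using \<open>t < Q\<close> by force
    qed
  qed
  then show ?thesis
    unfolding g_def d_def Q_def .
qed

lemma bij_betw_residue_class_greaterThanAtMost:
  fixes a b l :: nat
  assumes "0 < l"
  shows "bij_betw (\<lambda>j. b + ((a + 1) div l + 1 - j) * l) {1..(a + 1) div l}
    {j \<in> {b + 1..a + b + 1}. j mod l = b mod l}"
proof -
  define e where "e = (a + 1) mod l"
  define Q where "Q = (a + 1) div l"
  define g where "g j = b + (Q + 1 - j) * l" for j
  have a: "a + 1 = e + Q * l" and e: "e < l"
    using assms unfolding e_def Q_def by simp_all
  have "bij_betw g {1..Q} {j \<in> {b + 1..a + b + 1}. j mod l = b mod l}"
  proof (rule bij_betw_imageI)
    show "inj_on g {1..Q}"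
      using assms by (auto simp: inj_on_def g_def)
    show "g ` {1..Q} = {j \<in> {b + 1..a + b + 1}. j mod l = b mod l}"
    proof (intro equalityI subsetI)
      fix x assume "x \<in> g ` {1..Q}"
      then obtain j where j: "j \<in> {1..Q}" "x = g j" by auto
      then have "(Q + 1 - j) * l \<le> Q * l" "l \<le> (Q + 1 - j) * l"
        by (auto intro: mult_le_mono1)
      then have "b + 1 \<le> x" "x \<le> a + b + 1"
        using j(2) a assms unfolding g_def by linarith+
      moreover have "x mod l = b mod l"
        using j(2) by (simp add: g_def)
      ultimately show "x \<in> {j \<in> {b + 1..a + b + 1}. j mod l = b mod l}"
        by simp
    next
      fix x assume x: "x \<in> {j \<in> {b + 1..a + b + 1}. j mod l = b mod l}"
      then have "b + 1 \<le> x" "x \<le> a + b + 1"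
        by auto
      have "l dvd x - b"
        using x mod_eq_dvd_iff_nat[of b x l] by simp
      then obtain k where k: "x - b = k * l"
        by (metis dvd_div_mult_self)
      have "0 < k"
        using k \<open>b + 1 \<le> x\<close> by (cases k) auto
      have "k * l < (Q + 1) * l"
        using k \<open>x \<le> a + b + 1\<close> a e by simp
      then have "k < Q + 1"
        by (simp only: mult_less_cancel2)
      with \<open>0 < k\<close> have k_range: "k \<in> {1..Q}"
        by simp
      have "x = g (Q + 1 - k)"
        using k k_range \<open>b + 1 \<le> x\<close> by (simp add: g_def)
      moreover have "Q + 1 - k \<in> {1..Q}"
        using k_range by auto
      ultimately show "x \<in> g ` {1..Q}"
        by (rule image_eqI)
    qed
  qed
  then show ?thesis
    unfolding g_def Q_def .
qed

context
  fixes l :: nat and h :: rat and H :: "nat \<Rightarrow> rat"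
  assumes l_pos: "l > 0"
begin

definition theta_sum_up :: "nat \<Rightarrow> rat" where
  "theta_sum_up n = (\<Sum>s<n. theta l h H (int s + 1))"

definition theta_sum_down :: "nat \<Rightarrow> rat" where
  "theta_sum_down n = (\<Sum>s<n. theta l h H (- int s))"

lemma theta_add_multiple: "theta l h H (x + k * int l) = theta l h H x"
  by (simp add: theta_def)

lemma theta_below_period: "0 < i \<Longrightarrow> i < l \<Longrightarrow> theta l h H (int i) = H i"
  by (simp add: theta_def)

lemma theta_period: "theta l h H (int l) = - h + H0 l H"
  by (simp add: theta_def)

lemma theta_sum_up_below_period: "d < l \<Longrightarrow> theta_sum_up d = (\<Sum>j=1..d. H j)"
proof (induction d)
  case (Suc d)
  then show ?case
    using theta_below_period[of "Suc d"] by (simp add: theta_sum_up_def add.commute)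
qed (simp add: theta_sum_up_def)

lemma theta_sum_up_period: "theta_sum_up l = - h"
proof -
  obtain k where k: "l = Suc k" using l_pos by (cases l) auto
  then have "theta_sum_up l = theta_sum_up k + theta l h H (int l)"
    unfolding theta_sum_up_def by (simp add: add.commute)
  then show ?thesis
    using theta_sum_up_below_period[of k] theta_period k by (simp add: H0_def)
qed

lemma theta_sum_up_add_period: "theta_sum_up (n + l) = theta_sum_up n - h"
proof (induction n)
  case 0 then show ?case using theta_sum_up_period by (simp add: theta_sum_up_def)
next
  case (Suc n)
  have "theta l h H (int (n + l) + 1) = theta l h H (int n + 1)"
    using theta_add_multiple[of "int n + 1" 1] by (simp add: add_ac)
  with Suc show ?case by (simp add: theta_sum_up_def)
qed

lemma theta_sum_up_add_periods: "theta_sum_up (n + k * l) = theta_sum_up n - of_nat k * h"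
proof (induction k)
  case (Suc k)
  have "n + Suc k * l = (n + k * l) + l" by simp
  with Suc show ?case using theta_sum_up_add_period[of "n + k * l"] by (simp add: algebra_simps)
qed simp

lemma theta_sum_down_complement: "e \<le> l \<Longrightarrow> theta_sum_down e + theta_sum_up (l - e) = - h"
proof (induction e)
  case 0 then show ?case using theta_sum_up_period by (simp add: theta_sum_down_def)
next
  case (Suc e)
  then have "l - e = Suc (l - Suc e)" by simp
  moreover have "theta l h H (int (l - Suc e) + 1) = theta l h H (- int e)"
    using theta_add_multiple[of "- int e" 1] Suc.prems by (simp add: of_nat_diff)
  ultimately show ?case
    using Suc by (simp add: theta_sum_up_def theta_sum_down_def)
qed

lemma theta_sum_down_add_period: "theta_sum_down (n + l) = theta_sum_down n - h"
proof (induction n)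
  case 0 then show ?case
    using theta_sum_down_complement[of l] by (simp add: theta_sum_up_def theta_sum_down_def)
next
  case (Suc n)
  have "theta l h H (- int (n + l)) = theta l h H (- int n)"
    using theta_add_multiple[of "- int n" "-1"] by simp
  with Suc show ?case by (simp add: theta_sum_down_def)
qed

lemma theta_sum_down_add_periods: "theta_sum_down (n + k * l) = theta_sum_down n - of_nat k * h"
proof (induction k)
  case (Suc k)
  have "n + Suc k * l = (n + k * l) + l" by simp
  with Suc show ?case using theta_sum_down_add_period[of "n + k * l"] by (simp add: algebra_simps)
qed simp

lemma theta_sum_up_eq_e':
  assumes "0 < d" "d \<le> l"
  shows "theta_sum_up (d + k * l) = e' l h H (d mod l) - of_nat k * h"
proof (cases "d = l")
  case True
  then show ?thesis using theta_sum_up_add_periods theta_sum_up_period by (simp add: e'_def)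
next
  case False
  then show ?thesis
    using assms theta_sum_up_add_periods theta_sum_up_below_period by (simp add: e'_def)
qed

lemma uminus_theta_sum_down_eq_e'':
  assumes "e < l"
  shows "- theta_sum_down (e + k * l) = e'' l h H ((e + l - 1) mod l) + of_nat k * h"
proof (cases "e = 0")
  case True
  then show ?thesis
    using l_pos theta_sum_down_add_periods[of 0 k] by (simp add: theta_sum_down_def e''_def)
next
  case False
  then have "(e + l - 1) mod l = e - 1" "e - 1 \<noteq> l - 1" "l - (e - 1) - 1 = l - e"
    using assms by (simp_all add: mod_if)
  moreover have "theta_sum_down e = - h - (\<Sum>j=1..l-e. H j)"
    using theta_sum_down_complement[of e] theta_sum_up_below_period[of "l - e"] assms False
    by simp
  ultimately show ?thesis using theta_sum_down_add_periods by (simp add: e''_def)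
qed

lemma alpha_hook_leg:
  assumes "0 < j" "j \<le> b" "j mod l = b mod l"
  shows "alpha l h H (a + b + 1) (b + 1) j = theta_sum_up j"
proof -
  obtain c where c: "b = j + c * l"
    using assms mod_eq_dvd_iff_nat[of j b l] by (metis dvdE le_add_diff_inverse mult.commute)
  have "alpha l h H (a + b + 1) (b + 1) j = (\<Sum>s=1..j. theta l h H (int (b + 1) - int s))"
    using assms by (simp add: alpha_def A_sub_def)
  also have "\<dots> = (\<Sum>i<j. theta l h H (int (b + 1) - int (j - i)))"
    by (rule sum.reindex_bij_witness[of _ "\<lambda>i. j - i" "\<lambda>s. j - s"]) auto
  also have "\<dots> = (\<Sum>i<j. theta l h H (int i + 1))"
  proof (rule sum.cong[OF refl])
    fix i assume "i \<in> {..<j}"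
    then have "int (b + 1) - int (j - i) = (int i + 1) + int c * int l"
      using c by (simp add: of_nat_diff)
    then show "theta l h H (int (b + 1) - int (j - i)) = theta l h H (int i + 1)"
      using theta_add_multiple by presburger
  qed
  finally show ?thesis by (simp add: theta_sum_up_def)
qed

lemma alpha_hook_arm:
  assumes "0 < k" "k * l \<le> a + 1"
  shows "alpha l h H (a + b + 1) (b + 1) (b + k * l) = - theta_sum_down (a + 1 - k * l)"
proof (cases "k * l = a + 1")
  case True
  then show ?thesis by (simp add: alpha_def theta_sum_down_def)
next
  case False
  define p where "p = a - k * l"
  have "0 < k * l" using assms l_pos by simp
  then have "alpha l h H (a + b + 1) (b + 1) (b + k * l) =
        - (\<Sum>s=0..p. theta l h H (- int (a + b + 1) + int (b + 1) + int s))"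
    using assms False by (simp add: alpha_def A_sub_def p_def)
  also have "\<dots> = - (\<Sum>s=0..p. theta l h H (- int (p - s)))"
  proof (intro arg_cong[where f = uminus] sum.cong[OF refl])
    fix s assume "s \<in> {0..p}"
    then have "- int (a + b + 1) + int (b + 1) + int s = - int (p - s) + (- int k) * int l"
      using assms False by (simp add: p_def of_nat_diff)
    then show "theta l h H (- int (a + b + 1) + int (b + 1) + int s) = theta l h H (- int (p - s))"
      using theta_add_multiple by presburger
  qed
  also have "(\<Sum>s=0..p. theta l h H (- int (p - s))) = theta_sum_down (Suc p)"
    unfolding theta_sum_down_def
    by (rule sum.reindex_bij_witness[of _ "\<lambda>t. p - t" "\<lambda>s. p - s"]) auto
  finally show ?thesis using assms False by (simp add: p_def Suc_diff_le)
qed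

lemma hook_leg_eigenvalues:
  "image_mset (alpha l h H (a + b + 1) (b + 1)) (mset_set {j \<in> {1..b}. j mod l = b mod l})
   = image_mset (\<lambda>j. e' l h H (b mod l) - (of_nat j - 1) * h)
       (mset_set {1..nat \<lceil>(of_nat b :: rat) / of_nat l\<rceil>})"
proof (cases "b = 0")
  case False
  define d where "d = (b - 1) mod l + 1"
  define Q where "Q = (b - 1) div l + 1"
  define g where "g j = d + (j - 1) * l" for j
  have b: "b = d + (Q - 1) * l" and d: "0 < d" "d \<le> l"
    using False l_pos unfolding d_def Q_def by (simp_all add: Suc_leI)
  have bij: "bij_betw g {1..Q} {j \<in> {1..b}. j mod l = b mod l}"
    unfolding g_def d_def Q_def using False by (intro bij_betw_residue_class_atLeastAtMost l_pos) simp
  have vals: "alpha l h H (a + b + 1) (b + 1) (g j) = e' l h H (b mod l) - (of_nat j - 1) * h"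
    if j: "j \<in> {1..Q}" for j
  proof -
    have "g j \<in> {j \<in> {1..b}. j mod l = b mod l}"
      using bij_betw_apply[OF bij j] .
    then have "alpha l h H (a + b + 1) (b + 1) (g j) = theta_sum_up (g j)"
      by (intro alpha_hook_leg) auto
    also have "\<dots> = e' l h H (d mod l) - of_nat (j - 1) * h"
      unfolding g_def by (rule theta_sum_up_eq_e'[OF d])
    also have "d mod l = b mod l"
      using b by simp
    finally show ?thesis
      using j by (simp add: of_nat_diff)
  qed
  have ceiling_Q: "nat \<lceil>(of_nat b :: rat) / of_nat l\<rceil> = Q"
    using nat_ceiling_of_nat_divide[OF l_pos] False unfolding Q_def by simp
  show ?thesis
    unfolding image_mset_mset_set_bij_betw[OF bij] ceiling_Q
    by (rule image_mset_cong) (use vals in auto)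
qed simp

lemma hook_arm_eigenvalues:
  "image_mset (alpha l h H (a + b + 1) (b + 1))
     (mset_set {j \<in> {b + 1..a + b + 1}. j mod l = b mod l})
   = image_mset (\<lambda>j. e'' l h H (a mod l) + (of_nat j - 1) * h)
       (mset_set {1..nat \<lfloor>(of_nat (a + 1) :: rat) / of_nat l\<rfloor>})"
proof -
  define e where "e = (a + 1) mod l"
  define Q where "Q = (a + 1) div l"
  define g where "g j = b + (Q + 1 - j) * l" for j
  have a: "a + 1 = e + Q * l" and e: "e < l"
    using l_pos unfolding e_def Q_def by simp_all
  have bij: "bij_betw g {1..Q} {j \<in> {b + 1..a + b + 1}. j mod l = b mod l}"
    unfolding g_def Q_def using l_pos by (rule bij_betw_residue_class_greaterThanAtMost)
  have vals: "alpha l h H (a + b + 1) (b + 1) (g j) = e'' l h H (a mod l) + (of_nat j - 1) * h"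
    if j: "j \<in> {1..Q}" for j
  proof -
    define k where "k = Q + 1 - j"
    have "Q * l = k * l + (j - 1) * l"
      using j unfolding k_def by (simp flip: add_mult_distrib)
    then have k: "0 < k" "k * l \<le> a + 1" and rest: "a + 1 - k * l = e + (j - 1) * l"
      using j a unfolding k_def by auto
    have "a + l = (e + l - 1) + Q * l"
      using a l_pos by linarith
    then have index: "(e + l - 1) mod l = a mod l"
      by (metis mod_add_self2 mod_mult_self1)
    have "alpha l h H (a + b + 1) (b + 1) (g j) = - theta_sum_down (a + 1 - k * l)"
      unfolding g_def k_def[symmetric] by (rule alpha_hook_arm[OF k])
    also have "\<dots> = e'' l h H (a mod l) + of_nat (j - 1) * h"
      unfolding rest uminus_theta_sum_down_eq_e''[OF e] index ..
    finally show ?thesis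
      using j by (simp add: of_nat_diff)
  qed
  have floor_Q: "nat \<lfloor>(of_nat (a + 1) :: rat) / of_nat l\<rfloor> = Q"
    unfolding Q_def by (metis floor_divide_of_nat_eq nat_int)
  show ?thesis
    unfolding image_mset_mset_set_bij_betw[OF bij] floor_Q
    by (rule image_mset_cong) (use vals in auto)
qed

lemma hook_eigenvalues:
  "image_mset (alpha l h H (a + b + 1) (b + 1))
     (mset_set {j \<in> {1..a + b + 1}. int j mod int l = (int (b + 1) - 1) mod int l})
   = image_mset (\<lambda>j. e' l h H (b mod l) - (of_nat j - 1) * h)
       (mset_set {1..nat \<lceil>(of_nat b :: rat) / of_nat l\<rceil>})
   + image_mset (\<lambda>j. e'' l h H (a mod l) + (of_nat j - 1) * h)
       (mset_set {1..nat \<lfloor>(of_nat (a + 1) :: rat) / of_nat l\<rfloor>})"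
proof -
  define leg where "leg = {j \<in> {1..b}. j mod l = b mod l}"
  define arm where "arm = {j \<in> {b + 1..a + b + 1}. j mod l = b mod l}"
  have "{j \<in> {1..a + b + 1}. int j mod int l = (int (b + 1) - 1) mod int l} = leg \<union> arm"
    unfolding leg_def arm_def by (auto simp flip: zmod_int)
  moreover have "mset_set (leg \<union> arm) = mset_set leg + mset_set arm"
    unfolding leg_def arm_def by (rule mset_set_Union) auto
  ultimately show ?thesis
    unfolding leg_def arm_def
    by (simp only: image_mset_union hook_leg_eigenvalues hook_arm_eigenvalues)
qed

end

theorem lemma6p16:
  fixes l n :: nat and h :: rat and H :: "nat \<Rightarrow> rat" and mu :: "nat list"
  assumes "l \<ge> 1"
    and "mu \<in> P_empty l (n * l)"
  shows "Eig l h H mu =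
    (\<Sum>i\<in>{1..frob_k mu}.
        image_mset (\<lambda>j. e' l h H (frob_b mu i mod l) - (of_nat j - 1) * h)
          (mset_set {1..nat \<lceil>(of_nat (frob_b mu i) :: rat) / of_nat l\<rceil>})
      + image_mset (\<lambda>j. e'' l h H (frob_a mu i mod l) + (of_nat j - 1) * h)
          (mset_set {1..nat \<lfloor>(of_nat (frob_a mu i + 1) :: rat) / of_nat l\<rfloor>}))"
proof -
  have "0 < l" using assms(1) by simp
  then show ?thesis
    unfolding Eig_def Eig_i_def Let_def by (intro sum.cong refl hook_eigenvalues)
qed

end
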